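(* Let $T$ be a triangulation of an unpunctured bordered surface $(S,M)$, $Q=Q_{\overline T}$ and $F_1,\dots,F_n$ the associated exchange polynomials. If $F_i=F_j$ for some $i\neq j$, then $Q$ contains neither a subquiver $\tilde k\leftarrow i\rightarrow k$ nor a double arrow $i\xrightarrow{2}k$, for any vertex $k$ of $Q$.
   Context: $(S,M)$: compact surface (possibly non-orientable) with nonempty boundary, marked points $M\subset\partial S$ meeting every boundary component, no punctures, not a monogon/digon/triangle (boundary segments may or may not receive variables; if not, their quiver vertices are deleted). Quasi-arcs: arcs (up to isotopy) not bounding a Möbius strip with one marked point, and one-sided simple closed curves; compatible = disjoint, or the unique arc and one-sided curve in a Möbius strip with one marked point. Triangulation: maximal compatible set without one-sided curves. Double cover and quiver: replace each cross-cap by a cylinder to get $\tilde S$, glue two copies along new cylinder boundaries by the antipodal map (two oppositely oriented copies if $S$ orientable); $T$ lifts to $\overline T$ with lifts $i,\tilde i$ ($\tilde{\tilde i}=i$). $Q_{\overline T}$: vertices arcs (and boundary segments with variables) of $\overline T$; arrow $i\to j$ for each triangle where $j$ follows $i$ in the orientation; 2-cycles cancelled; $b_{ij}$ = (arrows $i\to j$) $-$ (arrows $j\to i$). $F_j=\prod_{b_{ij}+b_{\tilde ij}>0}x_i^{b_{ij}+b_{\tilde ij}}+\prod_{b_{ij}+b_{\tilde ij}<0}x_i^{-(b_{ij}+b_{\tilde ij})}$ over twin-pair representatives $i$. *)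

theory Defs
  imports Main
begin

text \<open>
S is obtained by gluing a finite set Tri of triangles along their sides.
Each triangle t has sides 0,1,2 (indices mod 3); with the reference orientation of t,
side i runs from corner i to corner i+1 (mod 3).
  ed t i : the edge of T (arc or boundary segment) occupying side i of t;
  fl t i : a flag recording the gluing: in the lifted triangle (t,eps) of the
           orientation double cover, side i carries the lift (ed t i, eps ~= fl t i).
Two sides carrying the same arc are glued; the gluing is orientation preserving
(w.r.t. the reference orientations) iff their flags agree.
Frozen: the boundary segments that receive variables.
\<close>

definition sides :: "'t set \<Rightarrow> ('t \<times> nat) set" where
  "sides Tri = Tri \<times> {0,1,2}"

definition occ :: "'t set \<Rightarrow> ('t \<Rightarrow> nat \<Rightarrow> 'e) \<Rightarrow> 'e \<Rightarrow> nat" where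
  "occ Tri ed e = card {s \<in> sides Tri. ed (fst s) (snd s) = e}"

definition arcs :: "'t set \<Rightarrow> ('t \<Rightarrow> nat \<Rightarrow> 'e) \<Rightarrow> 'e set" where
  "arcs Tri ed = {e. occ Tri ed e = 2}"

definition bsegs :: "'t set \<Rightarrow> ('t \<Rightarrow> nat \<Rightarrow> 'e) \<Rightarrow> 'e set" where
  "bsegs Tri ed = {e. occ Tri ed e = 1}"

definition tri_adj :: "'t set \<Rightarrow> ('t \<Rightarrow> nat \<Rightarrow> 'e) \<Rightarrow> ('t \<times> 't) set" where
  "tri_adj Tri ed = {(t1,t2). t1 \<in> Tri \<and> t2 \<in> Tri \<and> (\<exists>i<3. \<exists>j<3. ed t1 i = ed t2 j)}"

text \<open>Identification of corners induced by the gluing of sides; the marked points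
are the classes of corners.\<close>
definition corner_glue :: "'t set \<Rightarrow> ('t \<Rightarrow> nat \<Rightarrow> 'e) \<Rightarrow> ('t \<Rightarrow> nat \<Rightarrow> bool)
    \<Rightarrow> (('t \<times> nat) \<times> ('t \<times> nat)) set" where
  "corner_glue Tri ed fl =
     {((t1,c1),(t2,c2)). \<exists>i1 i2. (t1,i1) \<in> sides Tri \<and> (t2,i2) \<in> sides Tri \<and>
        (t1,i1) \<noteq> (t2,i2) \<and> ed t1 i1 = ed t2 i2 \<and>
        (if fl t1 i1 = fl t2 i2
         then (c1 = i1 \<and> c2 = (i2+1) mod 3) \<or> (c1 = (i1+1) mod 3 \<and> c2 = i2)
         else (c1 = i1 \<and> c2 = i2) \<or> (c1 = (i1+1) mod 3 \<and> c2 = (i2+1) mod 3))}"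

definition same_vertex :: "'t set \<Rightarrow> ('t \<Rightarrow> nat \<Rightarrow> 'e) \<Rightarrow> ('t \<Rightarrow> nat \<Rightarrow> bool)
    \<Rightarrow> (('t \<times> nat) \<times> ('t \<times> nat)) set" where
  "same_vertex Tri ed fl = (corner_glue Tri ed fl \<union> (corner_glue Tri ed fl)\<inverse>)\<^sup>*"

definition bdry_corner :: "'t set \<Rightarrow> ('t \<Rightarrow> nat \<Rightarrow> 'e) \<Rightarrow> 't \<times> nat \<Rightarrow> bool" where
  "bdry_corner Tri ed x = (ed (fst x) (snd x) \<in> bsegs Tri ed \<or>
                           ed (fst x) ((snd x + 2) mod 3) \<in> bsegs Tri ed)"

definition is_unpunctured_triangulation ::
  "'t set \<Rightarrow> ('t \<Rightarrow> nat \<Rightarrow> 'e) \<Rightarrow> ('t \<Rightarrow> nat \<Rightarrow> bool) \<Rightarrow> 'e set \<Rightarrow> bool" where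
  "is_unpunctured_triangulation Tri ed fl Frozen \<longleftrightarrow>
     finite Tri \<and> Tri \<noteq> {} \<and>
     \<comment> \<open>every edge occupies one (boundary segment) or two (arc) sides\<close>
     (\<forall>t\<in>Tri. \<forall>i<3. ed t i \<in> arcs Tri ed \<union> bsegs Tri ed) \<and>
     \<comment> \<open>S connected\<close>
     (\<forall>t1\<in>Tri. \<forall>t2\<in>Tri. (t1,t2) \<in> (tri_adj Tri ed)\<^sup>*) \<and>
     \<comment> \<open>no punctures: every marked point lies on the boundary\<close>
     (\<forall>x\<in>sides Tri. \<exists>y\<in>sides Tri. (x,y) \<in> same_vertex Tri ed fl \<and> bdry_corner Tri ed y) \<and>
     \<comment> \<open>a triangle with two equal sides is the Moebius strip with one marked point;
         its third side cannot be an arc (arcs do not bound such a strip)\<close>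
     (\<forall>t\<in>Tri. \<forall>i<3. \<forall>j<3. i \<noteq> j \<and> ed t i = ed t j \<longrightarrow>
         ed t (3 - i - j) \<in> bsegs Tri ed) \<and>
     \<comment> \<open>not a triangle (monogons and digons admit no triangulation)\<close>
     arcs Tri ed \<noteq> {} \<and>
     Frozen \<subseteq> bsegs Tri ed"

text \<open>The quiver of the lifted triangulation on the double cover.\<close>
definition qverts :: "'t set \<Rightarrow> ('t \<Rightarrow> nat \<Rightarrow> 'e) \<Rightarrow> 'e set \<Rightarrow> ('e \<times> bool) set" where
  "qverts Tri ed Frozen = (arcs Tri ed \<union> Frozen) \<times> UNIV"

definition twin :: "'e \<times> bool \<Rightarrow> 'e \<times> bool" where
  "twin v = (fst v, \<not> snd v)"

definition lift :: "('t \<Rightarrow> nat \<Rightarrow> 'e) \<Rightarrow> ('t \<Rightarrow> nat \<Rightarrow> bool) \<Rightarrow> 't \<Rightarrow> bool \<Rightarrow> nat \<Rightarrow> 'e \<times> bool" where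
  "lift ed fl t eps i = (ed t i, eps \<noteq> fl t i)"

definition nxt :: "bool \<Rightarrow> nat \<Rightarrow> nat" where
  "nxt eps i = (if eps then (i + 1) mod 3 else (i + 2) mod 3)"

text \<open>Number of arrows u -> v before cancelling 2-cycles: one for each lifted triangle
(t,eps) in which v follows u in the orientation.\<close>
definition narr :: "'t set \<Rightarrow> ('t \<Rightarrow> nat \<Rightarrow> 'e) \<Rightarrow> ('t \<Rightarrow> nat \<Rightarrow> bool)
    \<Rightarrow> 'e \<times> bool \<Rightarrow> 'e \<times> bool \<Rightarrow> nat" where
  "narr Tri ed fl u v = card {(t,eps,i). t \<in> Tri \<and> i < 3 \<and>
       lift ed fl t eps i = u \<and> lift ed fl t eps (nxt eps i) = v}"

definition bq :: "'t set \<Rightarrow> ('t \<Rightarrow> nat \<Rightarrow> 'e) \<Rightarrow> ('t \<Rightarrow> nat \<Rightarrow> bool) \<Rightarrow> 'e set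
    \<Rightarrow> 'e \<times> bool \<Rightarrow> 'e \<times> bool \<Rightarrow> int" where
  "bq Tri ed fl Frozen u v =
     (if u \<in> qverts Tri ed Frozen \<and> v \<in> qverts Tri ed Frozen
      then int (narr Tri ed fl u v) - int (narr Tri ed fl v u) else 0)"

text \<open>Exchange polynomial F_j (j an arc of T), in the variables x_i indexed by the
twin pairs, i.e. by the arcs and frozen boundary segments of T. A polynomial with integer
coefficients is represented by its coefficient function on exponent vectors.\<close>
definition exch_coef :: "'t set \<Rightarrow> ('t \<Rightarrow> nat \<Rightarrow> 'e) \<Rightarrow> ('t \<Rightarrow> nat \<Rightarrow> bool) \<Rightarrow> 'e set
    \<Rightarrow> 'e \<Rightarrow> 'e \<Rightarrow> int" where
  "exch_coef Tri ed fl Frozen j i =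
     bq Tri ed fl Frozen (i, False) (j, False) + bq Tri ed fl Frozen (i, True) (j, False)"

definition exch_poly :: "'t set \<Rightarrow> ('t \<Rightarrow> nat \<Rightarrow> 'e) \<Rightarrow> ('t \<Rightarrow> nat \<Rightarrow> bool) \<Rightarrow> 'e set
    \<Rightarrow> 'e \<Rightarrow> ('e \<Rightarrow> nat) \<Rightarrow> int" where
  "exch_poly Tri ed fl Frozen j =
     (let c = exch_coef Tri ed fl Frozen j;
          V = arcs Tri ed \<union> Frozen;
          mpos = (\<lambda>i. if i \<in> V \<and> c i > 0 then nat (c i) else 0);
          mneg = (\<lambda>i. if i \<in> V \<and> c i < 0 then nat (- c i) else 0)
      in (\<lambda>m. (if m = mpos then 1 else 0) + (if m = mneg then 1 else 0)))"

end

theory Submission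
  imports Defs
begin

text \<open>
  A double arrow from i to k, or arrows from i to both lifts of k, force the coefficient of x_k
  in F_i to be at least 2 in absolute value, and F_i determines these absolute values, so the
  same holds for F_j. Each unit of that coefficient is a lifted triangle in which a side carrying
  k is followed by i (resp. j); but an edge has at most four lifted positions, so all of them are
  used. Hence both triangles containing k are made of the arcs k, i, j only, and they form a
  connected component of S without boundary, which contradicts the absence of punctures.
\<close>

lemma less_3_cases: "(p::nat) < 3 \<Longrightarrow> p = 0 \<or> p = 1 \<or> p = 2" by auto

lemma nxt_simps [simp]:
  "nxt True 0 = 1" "nxt True 1 = 2" "nxt True 2 = 0"
  "nxt False 0 = 2" "nxt False 1 = 0" "nxt False 2 = 1"
  "nxt True (Suc 0) = 2" "nxt False (Suc 0) = 0"
  by (simp_all add: nxt_def)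

lemma nxt_less_3: "p < 3 \<Longrightarrow> nxt eps p < 3"
  by (auto simp: nxt_def)

lemma nxt_nxt_not: "p < 3 \<Longrightarrow> nxt (\<not> eps) (nxt eps p) = p"
  using less_3_cases[of p] by (cases eps) auto

lemma nxt_nxt_inverse [simp]:
  "p < 3 \<Longrightarrow> nxt False (nxt True p) = p" "p < 3 \<Longrightarrow> nxt True (nxt False p) = p"
  using nxt_nxt_not[of p True] nxt_nxt_not[of p False] by simp_all

lemma nxt_inj: "p < 3 \<Longrightarrow> q < 3 \<Longrightarrow> nxt eps p = nxt eps q \<Longrightarrow> p = q"
  by (metis nxt_nxt_not)

lemma nxt_neq: "p < 3 \<Longrightarrow> nxt eps p \<noteq> p"
  using less_3_cases[of p] by (cases eps) auto

lemma nxt_True_neq_nxt_False: "p < 3 \<Longrightarrow> nxt True p \<noteq> nxt False p"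
  using less_3_cases[of p] by auto

lemma less_3_eq_nxt: "p < 3 \<Longrightarrow> q < 3 \<Longrightarrow> q = p \<or> q = nxt True p \<or> q = nxt False p"
  using less_3_cases[of p] less_3_cases[of q] by auto

lemma pair_indicator_eq:
  fixes a b c d :: 'a
  assumes "(\<lambda>m. (if m = a then 1 else 0) + (if m = b then 1 else 0) :: int)
         = (\<lambda>m. (if m = c then 1 else 0) + (if m = d then 1 else 0))"
  shows "(a = c \<and> b = d) \<or> (a = d \<and> b = c)"
proof -
  have "\<And>m. (if m = a then 1 else 0) + (if m = b then 1 else 0) =
              ((if m = c then 1 else 0) + (if m = d then 1 else 0) :: int)"
    using assms by meson
  from this[of a] this[of b] this[of c] show ?thesis
    by (auto split: if_splits)
qed

lemma twin_twin [simp]: "twin (twin u) = u"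
  by (simp add: twin_def)

lemma twin_in_qverts_iff [simp]: "twin u \<in> qverts Tri ed Frozen \<longleftrightarrow> u \<in> qverts Tri ed Frozen"
  by (cases u) (auto simp: qverts_def twin_def)

definition arrows :: "'t set \<Rightarrow> ('t \<Rightarrow> nat \<Rightarrow> 'e) \<Rightarrow> ('t \<Rightarrow> nat \<Rightarrow> bool)
    \<Rightarrow> 'e \<times> bool \<Rightarrow> 'e \<times> bool \<Rightarrow> ('t \<times> bool \<times> nat) set" where
  "arrows Tri ed fl u v = {(t,eps,p). t \<in> Tri \<and> p < 3 \<and>
       lift ed fl t eps p = u \<and> lift ed fl t eps (nxt eps p) = v}"

lemma narr_eq_card_arrows: "narr Tri ed fl u v = card (arrows Tri ed fl u v)"
  by (simp add: narr_def arrows_def)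

lemma finite_arrows: "finite Tri \<Longrightarrow> finite (arrows Tri ed fl u v)"
  by (rule finite_subset[of _ "Tri \<times> UNIV \<times> {..<3}"]) (auto simp: arrows_def)

text \<open>An arrow from v to u in the lifted triangle (t,eps) is an arrow from twin u to twin v in
  the oppositely oriented copy (t, \<not>eps).\<close>
lemma narr_le_narr_twin:
  assumes "finite Tri"
  shows "narr Tri ed fl v u \<le> narr Tri ed fl (twin u) (twin v)"
proof -
  let ?f = "\<lambda>(t,eps,p). (t, \<not>eps, nxt eps p)"
  have "inj_on ?f (arrows Tri ed fl v u)"
    by (rule inj_onI) (auto simp: arrows_def dest: nxt_inj)
  moreover have "?f ` arrows Tri ed fl v u \<subseteq> arrows Tri ed fl (twin u) (twin v)"
    by (auto simp: arrows_def lift_def twin_def nxt_nxt_not nxt_less_3)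
  ultimately show ?thesis
    unfolding narr_eq_card_arrows by (rule card_inj_on_le[OF _ _ finite_arrows[OF assms]])
qed

lemma narr_twin: "finite Tri \<Longrightarrow> narr Tri ed fl v u = narr Tri ed fl (twin u) (twin v)"
  using narr_le_narr_twin[of Tri ed fl v u] narr_le_narr_twin[of Tri ed fl "twin u" "twin v"]
  by simp

lemma bq_antisym: "bq Tri ed fl Frozen u v = - bq Tri ed fl Frozen v u"
  by (auto simp: bq_def)

lemma bq_twin: "finite Tri \<Longrightarrow> bq Tri ed fl Frozen (twin u) (twin v) = - bq Tri ed fl Frozen u v"
  using narr_twin[of Tri ed fl v u] narr_twin[of Tri ed fl u v] by (auto simp: bq_def)

lemma bq_le_narr: "bq Tri ed fl Frozen u v \<le> int (narr Tri ed fl u v)"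
  by (simp add: bq_def)

definition followed_by :: "'t set \<Rightarrow> ('t \<Rightarrow> nat \<Rightarrow> 'e) \<Rightarrow> 'e \<Rightarrow> 'e \<Rightarrow> ('t \<times> bool \<times> nat) set" where
  "followed_by Tri ed x y = {(t,eps,p). t \<in> Tri \<and> p < 3 \<and> ed t p = x \<and> ed t (nxt eps p) = y}"

lemma finite_followed_by: "finite Tri \<Longrightarrow> finite (followed_by Tri ed x y)"
  by (rule finite_subset[of _ "Tri \<times> UNIV \<times> {..<3}"]) (auto simp: followed_by_def)

lemma narr_add_narr_le_card_followed_by:
  assumes "finite Tri" and "u1 \<noteq> u2" and "fst u2 = fst u1"
  shows "narr Tri ed fl u1 v + narr Tri ed fl u2 v \<le> card (followed_by Tri ed (fst u1) (fst v))"
proof -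
  have "arrows Tri ed fl u1 v \<inter> arrows Tri ed fl u2 v = {}"
    using assms(2) by (auto simp: arrows_def)
  moreover have "arrows Tri ed fl u1 v \<union> arrows Tri ed fl u2 v \<subseteq> followed_by Tri ed (fst u1) (fst v)"
    using assms(3) by (auto simp: arrows_def followed_by_def lift_def)
  ultimately show ?thesis
    unfolding narr_eq_card_arrows
    by (metis card_Un_disjoint card_mono finite_arrows finite_followed_by assms(1))
qed

lemma abs_bq_add_bq_twin_eq_abs_exch_coef:
  assumes "finite Tri"
  shows "\<bar>bq Tri ed fl Frozen (x, s) k + bq Tri ed fl Frozen (x, s) (twin k)\<bar>
       = \<bar>exch_coef Tri ed fl Frozen x (fst k)\<bar>"
proof -
  obtain \<kappa> e where k: "k = (\<kappa>, e)" by (cases k)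
  let ?B = "bq Tri ed fl Frozen"
  have "?B (x, True) (\<kappa>, b) = ?B (\<kappa>, \<not> b) (x, False)" for b
    using bq_twin[OF assms, of ed fl Frozen "(x, False)" "(\<kappa>, \<not> b)"]
      bq_antisym[of Tri ed fl Frozen "(x, False)" "(\<kappa>, \<not> b)"]
    by (simp add: twin_def)
  then show ?thesis
    using bq_antisym[of Tri ed fl Frozen "(x, False)"]
    by (cases s; cases e) (simp_all add: k twin_def exch_coef_def)
qed

lemma abs_exch_coef_le_card_followed_by:
  assumes "finite Tri"
  shows "\<bar>exch_coef Tri ed fl Frozen x \<kappa>\<bar> \<le> int (card (followed_by Tri ed \<kappa> x))"
proof -
  let ?B = "bq Tri ed fl Frozen" and ?N = "narr Tri ed fl"
  have "?N (\<kappa>, False) (x, False) + ?N (\<kappa>, True) (x, False) \<le> card (followed_by Tri ed \<kappa> x)"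
    using narr_add_narr_le_card_followed_by[OF assms] by force
  then have pos: "exch_coef Tri ed fl Frozen x \<kappa> \<le> int (card (followed_by Tri ed \<kappa> x))"
    using bq_le_narr[of Tri ed fl Frozen "(\<kappa>, False)" "(x, False)"]
      bq_le_narr[of Tri ed fl Frozen "(\<kappa>, True)" "(x, False)"]
    unfolding exch_coef_def by linarith
  have "?N (\<kappa>, True) (x, True) + ?N (\<kappa>, False) (x, True) \<le> card (followed_by Tri ed \<kappa> x)"
    using narr_add_narr_le_card_followed_by[OF assms] by force
  moreover have "?N (x, False) (\<kappa>, b) = ?N (\<kappa>, \<not> b) (x, True)" for b
    using narr_twin[OF assms, of ed fl "(x, False)" "(\<kappa>, b)"] by (simp add: twin_def)
  ultimately have "- exch_coef Tri ed fl Frozen x \<kappa> \<le> int (card (followed_by Tri ed \<kappa> x))"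
    using bq_le_narr[of Tri ed fl Frozen "(x, False)" "(\<kappa>, False)"]
      bq_le_narr[of Tri ed fl Frozen "(x, False)" "(\<kappa>, True)"]
      bq_antisym[of Tri ed fl Frozen "(x, False)"]
    unfolding exch_coef_def by fastforce
  with pos show ?thesis by linarith
qed

text \<open>The two monomials of F_i are determined by F_i up to order, and the exponents of x_\<kappa>
  in them add up to the absolute value of the coefficient.\<close>
lemma exch_poly_eq_imp_abs_exch_coef_eq:
  fixes ed :: "'t \<Rightarrow> nat \<Rightarrow> 'e"
  assumes "\<kappa> \<in> arcs Tri ed \<union> Frozen"
    and "exch_poly Tri ed fl Frozen i = exch_poly Tri ed fl Frozen j"
  shows "\<bar>exch_coef Tri ed fl Frozen i \<kappa>\<bar> = \<bar>exch_coef Tri ed fl Frozen j \<kappa>\<bar>"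
proof -
  define V where "V = arcs Tri ed \<union> Frozen"
  define mpos where "mpos = (\<lambda>c::'e \<Rightarrow> int. \<lambda>i. if i \<in> V \<and> c i > 0 then nat (c i) else 0)"
  define mneg where "mneg = (\<lambda>c::'e \<Rightarrow> int. \<lambda>i. if i \<in> V \<and> c i < 0 then nat (- c i) else 0)"
  have poly: "exch_poly Tri ed fl Frozen y =
      (\<lambda>m. (if m = mpos (exch_coef Tri ed fl Frozen y) then 1 else 0)
         + (if m = mneg (exch_coef Tri ed fl Frozen y) then 1 else 0))" for y
    by (simp add: exch_poly_def Let_def mpos_def mneg_def V_def)
  have abs_eq: "int (mpos c \<kappa> + mneg c \<kappa>) = \<bar>c \<kappa>\<bar>" for c
    using assms(1) by (simp add: mpos_def mneg_def V_def)
  show ?thesis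
    using pair_indicator_eq[OF assms(2)[unfolded poly]]
      abs_eq[of "exch_coef Tri ed fl Frozen i"] abs_eq[of "exch_coef Tri ed fl Frozen j"]
    by auto
qed

lemma triangulation_finite:
  "is_unpunctured_triangulation Tri ed fl Frozen \<Longrightarrow> finite Tri"
  by (simp add: is_unpunctured_triangulation_def)

lemma arc_not_bseg: "e \<in> arcs Tri ed \<Longrightarrow> e \<notin> bsegs Tri ed"
  by (simp add: arcs_def bsegs_def)

lemma sides_iff [simp]: "(t, p) \<in> sides Tri \<longleftrightarrow> t \<in> Tri \<and> p < 3"
  using less_3_cases[of p] by (auto simp: sides_def)

lemma third_side_bseg:
  assumes "is_unpunctured_triangulation Tri ed fl Frozen" and "t \<in> Tri"
    and "p < 3" and "q < 3" and "p \<noteq> q" and "ed t p = ed t q"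
  shows "ed t (3 - p - q) \<in> bsegs Tri ed"
  using assms unfolding is_unpunctured_triangulation_def by blast

lemma bseg_if_nxt_sides_eq:
  assumes "is_unpunctured_triangulation Tri ed fl Frozen" and "t \<in> Tri" and "p < 3"
    and "ed t (nxt True p) = ed t (nxt False p)"
  shows "ed t p \<in> bsegs Tri ed"
proof -
  have "3 - nxt True p - nxt False p = p"
    using less_3_cases[OF assms(3)] by auto
  then show ?thesis
    using third_side_bseg[OF assms(1,2) nxt_less_3 nxt_less_3 nxt_True_neq_nxt_False assms(4)] assms(3)
    by simp
qed

lemma bseg_if_side_eq_nxt_side:
  assumes "is_unpunctured_triangulation Tri ed fl Frozen" and "t \<in> Tri" and "p < 3"
    and "ed t p = ed t (nxt eps p)"
  shows "ed t (nxt (\<not> eps) p) \<in> bsegs Tri ed"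
proof -
  have "3 - p - nxt eps p = nxt (\<not> eps) p"
    using less_3_cases[OF assms(3)] by (cases eps) auto
  then show ?thesis
    using third_side_bseg[OF assms(1-3) nxt_less_3 nxt_neq[symmetric] assms(4)] assms(3) by simp
qed

definition sides_of :: "'t set \<Rightarrow> ('t \<Rightarrow> nat \<Rightarrow> 'e) \<Rightarrow> 'e \<Rightarrow> ('t \<times> nat) set" where
  "sides_of Tri ed x = {s \<in> sides Tri. ed (fst s) (snd s) = x}"

lemma card_sides_of: "card (sides_of Tri ed x) = occ Tri ed x"
  by (simp add: sides_of_def occ_def)

lemma finite_sides_of: "finite Tri \<Longrightarrow> finite (sides_of Tri ed x)"
  by (rule finite_subset[of _ "Tri \<times> {..<3}"]) (auto simp: sides_of_def)

lemma mem_sides_of_iff [simp]: "(t, p) \<in> sides_of Tri ed x \<longleftrightarrow> t \<in> Tri \<and> p < 3 \<and> ed t p = x"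
  by (simp add: sides_of_def)

text \<open>(t, eps, p) is determined by (t, p): the two sides of t next to the arc x carry different
  edges, since otherwise x would be a boundary segment.\<close>
lemma card_followed_by_le_2:
  assumes H: "is_unpunctured_triangulation Tri ed fl Frozen" and x: "x \<in> arcs Tri ed"
  shows "card (followed_by Tri ed x y) \<le> 2"
proof -
  let ?g = "\<lambda>(t, eps, p::nat). (t, p)"
  have orientation_unique: "eps = eps'"
    if "(t, eps, p) \<in> followed_by Tri ed x y" and "(t, eps', p) \<in> followed_by Tri ed x y"
    for t eps p eps'
  proof (rule ccontr)
    assume "eps \<noteq> eps'"
    from that have m: "t \<in> Tri" "p < 3" "ed t p = x" "ed t (nxt eps p) = y" "ed t (nxt eps' p) = y"
      by (simp_all add: followed_by_def)
    with \<open>eps \<noteq> eps'\<close> have "ed t (nxt True p) = ed t (nxt False p)"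
      by (cases eps; cases eps') simp_all
    then show False
      using bseg_if_nxt_sides_eq[OF H m(1,2)] m(3) x arc_not_bseg by metis
  qed
  have "inj_on ?g (followed_by Tri ed x y)"
    by (auto intro!: inj_onI dest: orientation_unique)
  moreover have "?g ` followed_by Tri ed x y \<subseteq> sides_of Tri ed x"
    by (auto simp: followed_by_def)
  ultimately have "card (followed_by Tri ed x y) \<le> card (sides_of Tri ed x)"
    by (rule card_inj_on_le[OF _ _ finite_sides_of[OF triangulation_finite[OF H]]])
  also have "\<dots> = 2"
    using x by (simp add: card_sides_of arcs_def)
  finally show ?thesis .
qed

lemma bq_twin_nonneg_if_bq_ge_2:
  assumes H: "is_unpunctured_triangulation Tri ed fl Frozen" and x: "x \<in> arcs Tri ed"
    and "bq Tri ed fl Frozen (x, s) k \<ge> 2"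
  shows "bq Tri ed fl Frozen (x, s) (twin k) \<ge> 0"
proof (rule ccontr)
  let ?N = "narr Tri ed fl"
  have fin: "finite Tri" using triangulation_finite[OF H] .
  assume "\<not> bq Tri ed fl Frozen (x, s) (twin k) \<ge> 0"
  then have "?N (twin k) (x, s) \<ge> 1"
    by (simp add: bq_def split: if_splits)
  moreover have "?N (twin k) (x, s) = ?N (x, \<not> s) k"
    using narr_twin[OF fin, of ed fl "twin k" "(x, s)"] by (simp add: twin_def)
  moreover have "?N (x, s) k \<ge> 2"
    using assms(3) by (simp add: bq_def split: if_splits)
  moreover have "?N (x, s) k + ?N (x, \<not> s) k \<le> card (followed_by Tri ed x (fst k))"
    using narr_add_narr_le_card_followed_by[OF fin, of "(x, s)" "(x, \<not> s)"] by simp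
  ultimately show False
    using card_followed_by_le_2[OF H x, of "fst k"] by linarith
qed

definition positions :: "'t set \<Rightarrow> ('t \<Rightarrow> nat \<Rightarrow> 'e) \<Rightarrow> 'e \<Rightarrow> ('t \<times> bool \<times> nat) set" where
  "positions Tri ed x = {(t,eps,p). t \<in> Tri \<and> p < 3 \<and> ed t p = x}"

lemma finite_positions: "finite Tri \<Longrightarrow> finite (positions Tri ed x)"
  by (rule finite_subset[of _ "Tri \<times> UNIV \<times> {..<3}"]) (auto simp: positions_def)

lemma card_positions:
  assumes "finite Tri"
  shows "card (positions Tri ed x) = 2 * occ Tri ed x"
proof -
  let ?f = "\<lambda>(eps, t, p). (t, eps, p)"
  have "positions Tri ed x = ?f ` (UNIV \<times> sides_of Tri ed x)"
  proof (intro equalityI subsetI)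
    fix z assume "z \<in> positions Tri ed x"
    then obtain t eps p where "z = (t, eps, p)" "(eps, t, p) \<in> UNIV \<times> sides_of Tri ed x"
      by (auto simp: positions_def)
    then show "z \<in> ?f ` (UNIV \<times> sides_of Tri ed x)"
      by (metis (mono_tags) case_prod_conv rev_image_eqI)
  qed (auto simp: positions_def)
  moreover have "inj_on ?f (UNIV \<times> sides_of Tri ed x)"
    by (auto intro: inj_onI)
  ultimately have "card (positions Tri ed x) = card ((UNIV :: bool set) \<times> sides_of Tri ed x)"
    by (metis card_image)
  then show ?thesis
    by (simp add: card_cartesian_product card_sides_of)
qed

lemma followed_by_two_edges_cover_positions:
  assumes H: "is_unpunctured_triangulation Tri ed fl Frozen" and "i \<noteq> j"
    and i: "card (followed_by Tri ed \<kappa> i) \<ge> 2" and j: "card (followed_by Tri ed \<kappa> j) \<ge> 2"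
  shows "occ Tri ed \<kappa> = 2"
    and "followed_by Tri ed \<kappa> i \<union> followed_by Tri ed \<kappa> j = positions Tri ed \<kappa>"
proof -
  have fin: "finite Tri" using triangulation_finite[OF H] .
  have "followed_by Tri ed \<kappa> i \<noteq> {}"
    using i by auto
  then obtain t eps p where "(t, eps, p) \<in> followed_by Tri ed \<kappa> i"
    by auto
  then have "\<kappa> \<in> arcs Tri ed \<union> bsegs Tri ed"
    using H unfolding is_unpunctured_triangulation_def followed_by_def by blast
  then have occ_le: "occ Tri ed \<kappa> \<le> 2"
    by (auto simp: arcs_def bsegs_def)
  let ?U = "followed_by Tri ed \<kappa> i \<union> followed_by Tri ed \<kappa> j"
  have sub: "?U \<subseteq> positions Tri ed \<kappa>"
    by (auto simp: followed_by_def positions_def)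
  have "followed_by Tri ed \<kappa> i \<inter> followed_by Tri ed \<kappa> j = {}"
    using \<open>i \<noteq> j\<close> by (auto simp: followed_by_def)
  then have "card ?U \<ge> 4"
    using card_Un_disjoint[OF finite_followed_by[OF fin, of ed \<kappa> i] finite_followed_by[OF fin, of ed \<kappa> j]] i j
    by simp
  moreover note fin_pos = finite_positions[OF fin, of ed \<kappa>]
  ultimately have "card ?U = card (positions Tri ed \<kappa>)" and occ2: "occ Tri ed \<kappa> = 2"
    using card_mono[OF fin_pos sub] card_positions[OF fin, of ed \<kappa>] occ_le by linarith+
  then show "occ Tri ed \<kappa> = 2" and "?U = positions Tri ed \<kappa>"
    using card_subset_eq[OF fin_pos sub] by simp_all
qed

definition triangle_closed :: "'t set \<Rightarrow> ('t \<Rightarrow> nat \<Rightarrow> 'e) \<Rightarrow> 'e set \<Rightarrow> bool" where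
  "triangle_closed Tri ed E \<longleftrightarrow> (\<forall>t\<in>Tri. (\<exists>q<3. ed t q \<in> E) \<longrightarrow> (\<forall>q<3. ed t q \<in> E))"

text \<open>A nonempty such E would, by connectedness, contain every side of every triangle, leaving
  no boundary at all.\<close>
lemma triangle_closed_arcs_unused:
  assumes H: "is_unpunctured_triangulation Tri ed fl Frozen"
    and arcs: "E \<subseteq> arcs Tri ed" and closed: "triangle_closed Tri ed E"
    and t0: "t0 \<in> Tri" "q0 < 3"
  shows "ed t0 q0 \<notin> E"
proof
  assume "ed t0 q0 \<in> E"
  have reach: "\<forall>q<3. ed t q \<in> E" if "(t0, t) \<in> (tri_adj Tri ed)\<^sup>*" for t
    using that
  proof (induction rule: rtrancl_induct)
    case base
    show ?case
      using closed t0 \<open>ed t0 q0 \<in> E\<close> unfolding triangle_closed_def by blast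
  next
    case (step t t')
    then obtain q q' where "t' \<in> Tri" "q' < 3" "ed t' q' = ed t q" "q < 3"
      unfolding tri_adj_def by force
    with step.IH show ?case
      using closed unfolding triangle_closed_def by metis
  qed
  have all_E: "ed t q \<in> E" if "t \<in> Tri" "q < 3" for t q
    using reach[of t] that H t0(1) unfolding is_unpunctured_triangulation_def by blast
  have "(t0, 0) \<in> sides Tri" using t0(1) by simp
  then obtain t p where "t \<in> Tri" "p < 3" "bdry_corner Tri ed (t, p)"
    using H unfolding is_unpunctured_triangulation_def by (metis sides_iff surj_pair)
  moreover have "ed t p \<notin> bsegs Tri ed" "ed t ((p + 2) mod 3) \<notin> bsegs Tri ed"
    if "t \<in> Tri" "p < 3" for t p
    using all_E that arcs arc_not_bseg by (meson mod_less_divisor subsetD zero_less_numeral)+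
  ultimately show False
    unfolding bdry_corner_def by simp
qed

lemma sides_of_arc_eq:
  assumes "finite Tri" and "x \<in> arcs Tri ed" and "a \<in> sides_of Tri ed x" "b \<in> sides_of Tri ed x"
    and "a \<noteq> b"
  shows "sides_of Tri ed x = {a, b}"
  using assms card_sides_of[of Tri ed x]
  by (intro card_subset_eq[symmetric] finite_sides_of) (auto simp: arcs_def)

lemma nxt_sides_if_followed_twice_by_two_arcs:
  assumes H: "is_unpunctured_triangulation Tri ed fl Frozen" and "i \<noteq> j"
    and "card (followed_by Tri ed \<kappa> i) \<ge> 2" and "card (followed_by Tri ed \<kappa> j) \<ge> 2"
    and t: "t \<in> Tri" "p < 3" "ed t p = \<kappa>"
  shows "{ed t (nxt True p), ed t (nxt False p)} = {i, j}"
proof -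
  note cover = followed_by_two_edges_cover_positions[OF H assms(2-4)]
  have next_ij: "ed t (nxt eps p) \<in> {i, j}" for eps
  proof -
    have "(t, eps, p) \<in> positions Tri ed \<kappa>" using t by (simp add: positions_def)
    then have "(t, eps, p) \<in> followed_by Tri ed \<kappa> i \<union> followed_by Tri ed \<kappa> j"
      using cover(2) by simp
    then show ?thesis by (auto simp: followed_by_def)
  qed
  have "\<kappa> \<in> arcs Tri ed" using cover(1) by (simp add: arcs_def)
  then have "ed t (nxt True p) \<noteq> ed t (nxt False p)"
    using bseg_if_nxt_sides_eq[OF H t(1,2)] t(3) arc_not_bseg by metis
  then show ?thesis
    using next_ij[of True] next_ij[of False] by auto
qed

lemma sides_of_if_followed_twice_by_two_arcs:
  assumes H: "is_unpunctured_triangulation Tri ed fl Frozen"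
    and ia: "i \<in> arcs Tri ed" and ja: "j \<in> arcs Tri ed" and "i \<noteq> j"
    and "card (followed_by Tri ed \<kappa> i) \<ge> 2" and "card (followed_by Tri ed \<kappa> j) \<ge> 2"
  obtains t1 p1 t2 p2 where "sides_of Tri ed \<kappa> = {(t1, p1), (t2, p2)}" and "t1 \<noteq> t2"
proof -
  obtain t1 p1 t2 p2 where sides_kappa: "sides_of Tri ed \<kappa> = {(t1, p1), (t2, p2)}"
      and "(t1, p1) \<noteq> (t2, p2)"
    using followed_by_two_edges_cover_positions(1)[OF H assms(4-6)] card_sides_of[of Tri ed \<kappa>]
    by (metis card_2_iff surj_pair)
  then have t1: "t1 \<in> Tri" "p1 < 3" "ed t1 p1 = \<kappa>" and t2: "t2 \<in> Tri" "p2 < 3" "ed t2 p2 = \<kappa>"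
    by (metis insertI1 insertI2 mem_sides_of_iff)+
  have "t1 \<noteq> t2"
  proof
    assume "t1 = t2"
    with \<open>(t1, p1) \<noteq> (t2, p2)\<close> obtain eps where "p2 = nxt eps p1"
      using less_3_eq_nxt[OF t1(2) t2(2)] by auto
    then have "ed t1 (nxt (\<not> eps) p1) \<in> bsegs Tri ed"
      using bseg_if_side_eq_nxt_side[OF H t1(1,2)] t1(3) t2(3) \<open>t1 = t2\<close> by simp
    moreover have "ed t1 (nxt (\<not> eps) p1) \<in> {i, j}"
      using nxt_sides_if_followed_twice_by_two_arcs[OF H assms(4-6) t1] by (cases eps) auto
    ultimately show False using ia ja by (auto dest: arc_not_bseg)
  qed
  with sides_kappa show ?thesis using that by blast
qed

lemma triangle_closed_if_followed_twice_by_two_arcs: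
  assumes H: "is_unpunctured_triangulation Tri ed fl Frozen"
    and ia: "i \<in> arcs Tri ed" and ja: "j \<in> arcs Tri ed" and "i \<noteq> j"
    and "card (followed_by Tri ed \<kappa> i) \<ge> 2" and "card (followed_by Tri ed \<kappa> j) \<ge> 2"
  shows "triangle_closed Tri ed {\<kappa>, i, j}"
proof -
  have fin: "finite Tri" using triangulation_finite[OF H] .
  note nxt_sides = nxt_sides_if_followed_twice_by_two_arcs[OF H assms(4-6)]
  have kappa_triangle: "ed t q \<in> {\<kappa>, i, j}" if "t \<in> Tri" "p < 3" "ed t p = \<kappa>" "q < 3" for t p q
    using less_3_eq_nxt[OF that(2,4)] nxt_sides[OF that(1-3)] that(3) by blast
  have kappa_triangle_has: "\<exists>q<3. ed t q = x" if "t \<in> Tri" "p < 3" "ed t p = \<kappa>" "x \<in> {i, j}" for t p x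
    using nxt_sides[OF that(1-3)] nxt_less_3[OF that(2)] that(4) by (metis insertE singletonD)
  obtain t1 p1 t2 p2 where sides_kappa: "sides_of Tri ed \<kappa> = {(t1, p1), (t2, p2)}" and "t1 \<noteq> t2"
    using sides_of_if_followed_twice_by_two_arcs[OF H ia ja assms(4-6)] by blast
  then have t1: "t1 \<in> Tri" "p1 < 3" "ed t1 p1 = \<kappa>" and t2: "t2 \<in> Tri" "p2 < 3" "ed t2 p2 = \<kappa>"
    by (metis insertI1 insertI2 mem_sides_of_iff)+
  have ij_triangle: "t = t1 \<or> t = t2"
    if tq: "t \<in> Tri" "q < 3" "ed t q = x" and x: "x \<in> {i, j}" for t q x
  proof -
    obtain q1 q2 where q: "(t1, q1) \<in> sides_of Tri ed x" "(t2, q2) \<in> sides_of Tri ed x"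
      using kappa_triangle_has[OF t1 x] kappa_triangle_has[OF t2 x] t1(1) t2(1) by auto
    have "x \<in> arcs Tri ed" using x ia ja by blast
    then have "sides_of Tri ed x = {(t1, q1), (t2, q2)}"
      using sides_of_arc_eq[OF fin _ q] \<open>t1 \<noteq> t2\<close> by simp
    moreover have "(t, q) \<in> sides_of Tri ed x" using tq by simp
    ultimately show ?thesis by auto
  qed
  have "t = t1 \<or> t = t2" if "t \<in> Tri" "q < 3" "ed t q \<in> {\<kappa>, i, j}" for t q
  proof (cases "ed t q = \<kappa>")
    case True
    then have "(t, q) \<in> sides_of Tri ed \<kappa>" using that(1,2) by simp
    then show ?thesis using sides_kappa(1) by auto
  next
    case False
    then show ?thesis using ij_triangle[OF that(1,2)] that(3) by blast
  qed
  then show ?thesis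
    unfolding triangle_closed_def using kappa_triangle[OF t1] kappa_triangle[OF t2] by blast
qed

lemma not_followed_twice_by_two_arcs:
  assumes H: "is_unpunctured_triangulation Tri ed fl Frozen"
    and ia: "i \<in> arcs Tri ed" and ja: "j \<in> arcs Tri ed" and "i \<noteq> j"
  shows "\<not> (card (followed_by Tri ed \<kappa> i) \<ge> 2 \<and> card (followed_by Tri ed \<kappa> j) \<ge> 2)"
proof
  assume twice: "card (followed_by Tri ed \<kappa> i) \<ge> 2 \<and> card (followed_by Tri ed \<kappa> j) \<ge> 2"
  then have "followed_by Tri ed \<kappa> i \<noteq> {}" by auto
  then obtain t eps p where t: "t \<in> Tri" "p < 3" "ed t p = \<kappa>"
    by (auto simp: followed_by_def)
  have "\<kappa> \<in> arcs Tri ed"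
    using followed_by_two_edges_cover_positions(1)[OF H \<open>i \<noteq> j\<close>] twice by (simp add: arcs_def)
  then have "{\<kappa>, i, j} \<subseteq> arcs Tri ed" using ia ja by simp
  moreover have "triangle_closed Tri ed {\<kappa>, i, j}"
    using triangle_closed_if_followed_twice_by_two_arcs[OF H ia ja \<open>i \<noteq> j\<close>] twice by blast
  ultimately have "ed t p \<notin> {\<kappa>, i, j}"
    using triangle_closed_arcs_unused[OF H _ _ t(1,2)] by blast
  with t(3) show False by simp
qed

theorem lemma4p17:
  fixes Tri :: "'t set" and ed :: "'t \<Rightarrow> nat \<Rightarrow> 'e" and fl :: "'t \<Rightarrow> nat \<Rightarrow> bool"
    and Frozen :: "'e set"
  assumes "is_unpunctured_triangulation Tri ed fl Frozen"
    and "i \<in> arcs Tri ed" and "j \<in> arcs Tri ed" and "i \<noteq> j"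
    and "exch_poly Tri ed fl Frozen i = exch_poly Tri ed fl Frozen j"
  shows "\<forall>s::bool. \<forall>k\<in>qverts Tri ed Frozen.
           \<not> (bq Tri ed fl Frozen (i, s) k > 0 \<and> bq Tri ed fl Frozen (i, s) (twin k) > 0) \<and>
           \<not> (bq Tri ed fl Frozen (i, s) k \<ge> 2)"
proof (intro allI ballI)
  fix s k assume "k \<in> qverts Tri ed Frozen"
  then have k: "fst k \<in> arcs Tri ed \<union> Frozen" by (auto simp: qverts_def)
  have fin: "finite Tri" using triangulation_finite[OF assms(1)] .
  have "\<bar>exch_coef Tri ed fl Frozen i (fst k)\<bar> < 2"
  proof (rule ccontr)
    assume "\<not> ?thesis"
    then have "\<bar>exch_coef Tri ed fl Frozen x (fst k)\<bar> \<ge> 2" if "x \<in> {i, j}" for x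
      using exch_poly_eq_imp_abs_exch_coef_eq[OF k assms(5)] that by auto
    then have "card (followed_by Tri ed (fst k) x) \<ge> 2" if "x \<in> {i, j}" for x
      using abs_exch_coef_le_card_followed_by[OF fin, of ed fl Frozen x "fst k"] that by fastforce
    then show False
      using not_followed_twice_by_two_arcs[OF assms(1-4)] by blast
  qed
  then have "\<bar>bq Tri ed fl Frozen (i, s) k + bq Tri ed fl Frozen (i, s) (twin k)\<bar> < 2"
    using abs_bq_add_bq_twin_eq_abs_exch_coef[OF fin, of ed fl Frozen i s k] by simp
  then show "\<not> (bq Tri ed fl Frozen (i, s) k > 0 \<and> bq Tri ed fl Frozen (i, s) (twin k) > 0) \<and>
           \<not> (bq Tri ed fl Frozen (i, s) k \<ge> 2)"
    using bq_twin_nonneg_if_bq_ge_2[OF assms(1,2), of s k] by linarith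
qed

end
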